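(* In any execution of the algorithm described in the context on a camera object $S$ and an associated versioned CAS object $O$: (1) before initTS is called on a VNode, $\mathit{VHead}$ has contained a pointer to that VNode; (2) after a complete execution of initTS on some VNode, that VNode's timestamp is valid.
   Context: Camera $S$ has an integer field timestamp, initially 0; takeSnapshot(): read $t:=S.\mathit{timestamp}$, perform CAS$(S.\mathit{timestamp},t,t+1)$, return $t$. A VNode has fields val and nextv (both immutable after creation) and ts (an integer or special value TBD, initially TBD). Versioned CAS object $O$ has a field $\mathit{VHead}$. Constructor with value $v$: $\mathit{VHead}:=$ new VNode(val $v$, nextv NULL); initTS($\mathit{VHead}$). initTS($n$): if $n.ts=$TBD, read $c:=S.\mathit{timestamp}$ and CAS$(n.ts,\mathrm{TBD},c)$. readSnapshot($ts$): $node:=\mathit{VHead}$; initTS($node$); while $node.ts>ts$, $node:=node.nextv$; return $node.val$. vRead(): $h:=\mathit{VHead}$; initTS($h$); return $h.val$. vCAS(oldV,newV): $h:=\mathit{VHead}$; initTS($h$); if $h.val\neq$ oldV return false; if newV $=$ oldV return true; $m:=$ new VNode(val newV, nextv $h$); if CAS$(\mathit{VHead},h,m)$ succeeds, initTS($m$) and return true; else delete $m$, call initTS on the current value of $\mathit{VHead}$, return false. A VNode's timestamp is valid in a configuration if its ts field is not TBD there, and invalid otherwise. *)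

theory Defs
  imports Main
begin

text \<open>Every shared-memory access (read/write/CAS of S.timestamp, VHead, a node's ts field)
  is one atomic step of one process; steps of different processes interleave arbitrarily.\<close>

type_synonym ptr = nat

datatype tsv = TBD | Stamp int

record 'v vnode =
  val   :: 'v
  nextv :: "ptr option"
  ts    :: tsv

text \<open>Continuation: what the caller does after initTS returns.\<close>
datatype 'v cont =
    KCtor
  | KSnap int
  | KRead
  | KCas 'v 'v
  | KDone

datatype 'v pc =
    Idle
  | CtorAlloc 'v
  | CtorCall
  | InitRead ptr "'v cont"
  | InitStamp ptr "'v cont"
  | InitCas ptr int "'v cont"
  | SnapHead int
  | SnapLoop ptr int
  | ReadHead
  | CasHead 'v 'v
  | CasCheck ptr 'v 'v
  | CasSwap ptr ptr
  | CasRetry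
  | TakeRead
  | TakeCas int

datatype ctor_state = CNone | CRunning | CDone

record ('p, 'v) conf =
  stamp :: int
  vhead :: "ptr option"               \<comment> \<open>O.VHead (None = not yet set)\<close>
  heap  :: "ptr \<Rightarrow> 'v vnode option"
  nxt   :: ptr                        \<comment> \<open>next fresh address (addresses never reused)\<close>
  ctor  :: ctor_state
  pc    :: "'p \<Rightarrow> 'v pc"

definition init_conf :: "('p, 'v) conf" where
  "init_conf = \<lparr>stamp = 0, vhead = None, heap = (\<lambda>_. None), nxt = 0, ctor = CNone,
                 pc = (\<lambda>_. Idle)\<rparr>"

fun resume :: "'v cont \<Rightarrow> ptr \<Rightarrow> 'v pc" where
  "resume KCtor n = Idle"
| "resume (KSnap t) n = SnapLoop n t"
| "resume KRead n = Idle"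
| "resume (KCas old new) n = CasCheck n old new"
| "resume KDone n = Idle"

definition finish :: "'p \<Rightarrow> 'v cont \<Rightarrow> ptr \<Rightarrow> ('p, 'v) conf \<Rightarrow> ('p, 'v) conf" where
  "finish p k n c = c\<lparr>pc := (pc c)(p := resume k n),
                       ctor := (if k = KCtor then CDone else ctor c)\<rparr>"

definition setpc :: "'p \<Rightarrow> 'v pc \<Rightarrow> ('p, 'v) conf \<Rightarrow> ('p, 'v) conf" where
  "setpc p q c = c\<lparr>pc := (pc c)(p := q)\<rparr>"

inductive pstep :: "'p \<Rightarrow> ('p, 'v) conf \<Rightarrow> ('p, 'v) conf \<Rightarrow> bool" where
  inv_ctor: "pc c p = Idle \<Longrightarrow> ctor c = CNone \<Longrightarrow>
     pstep p c ((setpc p (CtorAlloc v) c)\<lparr>ctor := CRunning\<rparr>)"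
| inv_snap: "pc c p = Idle \<Longrightarrow> ctor c = CDone \<Longrightarrow> pstep p c (setpc p (SnapHead t) c)"
| inv_read: "pc c p = Idle \<Longrightarrow> ctor c = CDone \<Longrightarrow> pstep p c (setpc p ReadHead c)"
| inv_cas:  "pc c p = Idle \<Longrightarrow> ctor c = CDone \<Longrightarrow> pstep p c (setpc p (CasHead old new) c)"
| inv_take: "pc c p = Idle \<Longrightarrow> pstep p c (setpc p TakeRead c)"
| ctor_alloc: "pc c p = CtorAlloc v \<Longrightarrow>
     pstep p c ((setpc p CtorCall c)\<lparr>heap := (heap c)(nxt c := Some \<lparr>val = v, nextv = None, ts = TBD\<rparr>),
                                     vhead := Some (nxt c), nxt := Suc (nxt c)\<rparr>)"
| ctor_call: "pc c p = CtorCall \<Longrightarrow> vhead c = Some h \<Longrightarrow> pstep p c (setpc p (InitRead h KCtor) c)"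
| init_tbd: "pc c p = InitRead n k \<Longrightarrow> heap c n = Some nd \<Longrightarrow> ts nd = TBD \<Longrightarrow>
     pstep p c (setpc p (InitStamp n k) c)"
| init_valid: "pc c p = InitRead n k \<Longrightarrow> heap c n = Some nd \<Longrightarrow> ts nd \<noteq> TBD \<Longrightarrow>
     pstep p c (finish p k n c)"
| init_stamp: "pc c p = InitStamp n k \<Longrightarrow> pstep p c (setpc p (InitCas n (stamp c) k) c)"
| init_cas: "pc c p = InitCas n s k \<Longrightarrow> heap c n = Some nd \<Longrightarrow>
     pstep p c ((finish p k n c)\<lparr>heap := (heap c)(n := Some (if ts nd = TBD then nd\<lparr>ts := Stamp s\<rparr> else nd))\<rparr>)"
| snap_head: "pc c p = SnapHead t \<Longrightarrow> vhead c = Some h \<Longrightarrow> pstep p c (setpc p (InitRead h (KSnap t)) c)"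
| snap_next: "pc c p = SnapLoop n t \<Longrightarrow> heap c n = Some nd \<Longrightarrow> ts nd = Stamp s \<Longrightarrow> s > t \<Longrightarrow>
     nextv nd = Some n' \<Longrightarrow> pstep p c (setpc p (SnapLoop n' t) c)"
| snap_ret: "pc c p = SnapLoop n t \<Longrightarrow> heap c n = Some nd \<Longrightarrow>
     \<not> (\<exists>s n'. ts nd = Stamp s \<and> s > t \<and> nextv nd = Some n') \<Longrightarrow> pstep p c (setpc p Idle c)"
| read_head: "pc c p = ReadHead \<Longrightarrow> vhead c = Some h \<Longrightarrow> pstep p c (setpc p (InitRead h KRead) c)"
| cas_head: "pc c p = CasHead old new \<Longrightarrow> vhead c = Some h \<Longrightarrow>
     pstep p c (setpc p (InitRead h (KCas old new)) c)"
| cas_neq: "pc c p = CasCheck h old new \<Longrightarrow> heap c h = Some nd \<Longrightarrow> val nd \<noteq> old \<Longrightarrow>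
     pstep p c (setpc p Idle c)"
| cas_same: "pc c p = CasCheck h old new \<Longrightarrow> heap c h = Some nd \<Longrightarrow> val nd = old \<Longrightarrow> new = old \<Longrightarrow>
     pstep p c (setpc p Idle c)"
| cas_alloc: "pc c p = CasCheck h old new \<Longrightarrow> heap c h = Some nd \<Longrightarrow> val nd = old \<Longrightarrow> new \<noteq> old \<Longrightarrow>
     pstep p c ((setpc p (CasSwap h (nxt c)) c)\<lparr>heap := (heap c)(nxt c := Some \<lparr>val = new, nextv = Some h, ts = TBD\<rparr>),
                                               nxt := Suc (nxt c)\<rparr>)"
| cas_succ: "pc c p = CasSwap h m \<Longrightarrow> vhead c = Some h \<Longrightarrow>
     pstep p c ((setpc p (InitRead m KDone) c)\<lparr>vhead := Some m\<rparr>)"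
| cas_fail: "pc c p = CasSwap h m \<Longrightarrow> vhead c \<noteq> Some h \<Longrightarrow>
     pstep p c ((setpc p CasRetry c)\<lparr>heap := (heap c)(m := None)\<rparr>)"
| cas_retry: "pc c p = CasRetry \<Longrightarrow> vhead c = Some h \<Longrightarrow> pstep p c (setpc p (InitRead h KDone) c)"
| take_read: "pc c p = TakeRead \<Longrightarrow> pstep p c (setpc p (TakeCas (stamp c)) c)"
| take_cas: "pc c p = TakeCas t \<Longrightarrow>
     pstep p c ((setpc p Idle c)\<lparr>stamp := (if stamp c = t then t + 1 else stamp c)\<rparr>)"

definition step :: "('p, 'v) conf \<Rightarrow> ('p, 'v) conf \<Rightarrow> bool" where
  "step c c' \<longleftrightarrow> (\<exists>p. pstep p c c')"

definition execution :: "(nat \<Rightarrow> ('p, 'v) conf) \<Rightarrow> nat \<Rightarrow> bool" where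
  "execution C N \<longleftrightarrow> C 0 = init_conf \<and> (\<forall>i < N. step (C i) (C (Suc i)))"

fun init_node :: "'v pc \<Rightarrow> ptr option" where
  "init_node (InitRead n k) = Some n"
| "init_node (InitStamp n k) = Some n"
| "init_node (InitCas n s k) = Some n"
| "init_node _ = None"

definition ts_valid :: "('p, 'v) conf \<Rightarrow> ptr \<Rightarrow> bool" where
  "ts_valid c n \<longleftrightarrow> (\<exists>nd. heap c n = Some nd \<and> ts nd \<noteq> TBD)"

end

theory Submission
  imports Defs
begin

text \<open>Part (1) is a local property of single steps: a process enters initTS only on a node
  it has just read from VHead, or on the node it has just installed there by a successful CAS.
  Part (2) holds at the moment a process leaves initTS, since it either saw a stamp or wrote one;
  it then persists because the only steps that destroy or overwrite a heap cell are allocation,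
  which uses a fresh address, and the deletion after a failed vCAS, whose node was never visible
  to anybody else and so still has an invalid timestamp.\<close>

definition allocated_below_nxt :: "('p, 'v) conf \<Rightarrow> bool" where
  "allocated_below_nxt c \<longleftrightarrow>
     (\<forall>k. nxt c \<le> k \<longrightarrow> heap c k = None)
   \<and> (\<forall>h. vhead c = Some h \<longrightarrow> h < nxt c)
   \<and> (\<forall>p n. init_node (pc c p) = Some n \<longrightarrow> n < nxt c)
   \<and> (\<forall>p h m. pc c p = CasSwap h m \<longrightarrow> m < nxt c)"

definition pending_nodes_private :: "('p, 'v) conf \<Rightarrow> bool" where
  "pending_nodes_private c \<longleftrightarrow>
     (\<forall>p h m. pc c p = CasSwap h m \<longrightarrow>
        (\<exists>nd. heap c m = Some nd \<and> ts nd = TBD)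
      \<and> vhead c \<noteq> Some m
      \<and> (\<forall>q. init_node (pc c q) \<noteq> Some m)
      \<and> (\<forall>q h'. pc c q = CasSwap h' m \<longrightarrow> q = p))"

lemma execution_pstep:
  assumes "execution C N" "i < N"
  shows "\<exists>p. pstep p (C i) (C (Suc i))"
  using assms by (auto simp: execution_def step_def)

inductive reachable :: "('p, 'v) conf \<Rightarrow> bool" where
  reachable_init: "reachable init_conf"
| reachable_pstep: "reachable c \<Longrightarrow> pstep p c c' \<Longrightarrow> reachable c'"

lemma reachable_execution:
  assumes "execution C N" "i \<le> N"
  shows "reachable (C i)"
  using assms(2)
proof (induction i)
  case 0
  show ?case using assms(1) by (simp add: execution_def reachable_init)
next
  case (Suc i)
  then have "reachable (C i)" by simp
  moreover obtain p where "pstep p (C i) (C (Suc i))"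
    using execution_pstep[OF assms(1), of i] Suc.prems by auto
  ultimately show ?case by (rule reachable_pstep)
qed

lemma init_node_resume [simp]: "init_node (resume k n) = None"
  by (cases k) auto

lemma resume_neq_CasSwap [simp]: "resume k n \<noteq> CasSwap h m"
  by (cases k) auto

lemma allocated_below_nxt_pstep:
  assumes "pstep p c c'" "allocated_below_nxt c"
  shows "allocated_below_nxt c'"
  using assms
  by (induction rule: pstep.induct)
     ((auto simp: allocated_below_nxt_def setpc_def finish_def less_Suc_eq),
      (metis init_node.simps(1,2))+)

lemma pending_nodes_private_pstep:
  assumes "pstep p c c'" "allocated_below_nxt c" "pending_nodes_private c"
  shows "pending_nodes_private c'"
  using assms
  by (induction rule: pstep.induct)
     ((auto simp: allocated_below_nxt_def pending_nodes_private_def setpc_def finish_def),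
      (metis less_irrefl init_node.simps(1-3))+)

lemma reachable_invariants:
  assumes "reachable c"
  shows "allocated_below_nxt c \<and> pending_nodes_private c"
  using assms
proof (induction rule: reachable.induct)
  case reachable_init
  show ?case by (simp add: allocated_below_nxt_def pending_nodes_private_def init_conf_def)
next
  case (reachable_pstep c p c')
  then show ?case
    using allocated_below_nxt_pstep[of p c c'] pending_nodes_private_pstep[of p c c'] by blast
qed

lemma ts_valid_pstep:
  assumes "pstep p c c'" "allocated_below_nxt c" "pending_nodes_private c" "ts_valid c n"
  shows "ts_valid c' n"
  using assms
proof (induction rule: pstep.induct)
  case (ctor_alloc c p v)
  then have "n \<noteq> nxt c" by (auto simp: allocated_below_nxt_def ts_valid_def)
  with ctor_alloc.prems(3) show ?case by (simp add: ts_valid_def setpc_def)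
next
  case (cas_alloc c p h old new nd)
  then have "n \<noteq> nxt c" by (auto simp: allocated_below_nxt_def ts_valid_def)
  with cas_alloc.prems(3) show ?case by (simp add: ts_valid_def setpc_def)
next
  case (cas_fail c p h m)
  then have "m \<noteq> n" by (fastforce simp: pending_nodes_private_def ts_valid_def)
  with cas_fail.prems(3) show ?case by (simp add: ts_valid_def setpc_def)
qed (auto simp: ts_valid_def setpc_def finish_def)

lemma ts_valid_execution_persists:
  assumes "execution C N" "i \<le> k" "k \<le> N" "ts_valid (C i) n"
  shows "ts_valid (C k) n"
  using assms(2)
proof (induction rule: dec_induct)
  case base
  show ?case by (fact assms(4))
next
  case (step m)
  then have "m < N" using assms(3) by simp
  then obtain p where "pstep p (C m) (C (Suc m))"
    using execution_pstep[OF assms(1)] by blast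
  moreover have "reachable (C m)"
    using reachable_execution[OF assms(1)] \<open>m < N\<close> by simp
  ultimately show ?case
    using ts_valid_pstep reachable_invariants step.IH by metis
qed

lemma pc_pstep_other:
  assumes "pstep q c c'" "p \<noteq> q"
  shows "pc c' p = pc c p"
  using assms by (induction rule: pstep.induct) (simp_all add: setpc_def finish_def)

lemma pstep_enters_initTS_at_vhead:
  assumes "pstep q c c'" "init_node (pc c p) \<noteq> Some n" "init_node (pc c' p) = Some n"
  shows "vhead c = Some n \<or> vhead c' = Some n"
proof -
  have "q = p" using assms(2,3) pc_pstep_other[OF assms(1)] by metis
  from assms show ?thesis
    unfolding \<open>q = p\<close> by (induction rule: pstep.induct) (simp_all add: setpc_def finish_def)
qed

lemma pstep_leaves_initTS_ts_valid:
  assumes "pstep q c c'" "init_node (pc c p) = Some n" "init_node (pc c' p) \<noteq> Some n"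
  shows "ts_valid c' n"
proof -
  have "q = p" using assms(2,3) pc_pstep_other[OF assms(1)] by metis
  from assms show ?thesis
    unfolding \<open>q = p\<close>
    by (induction rule: pstep.induct) (simp_all add: setpc_def finish_def ts_valid_def)
qed

theorem lemmaA2:
  fixes C :: "nat \<Rightarrow> ('p, 'v) conf" and N :: nat
  assumes "execution C N"
  shows "(\<forall>i p n. i < N \<and> init_node (pc (C i) p) \<noteq> Some n \<and> init_node (pc (C (Suc i)) p) = Some n
            \<longrightarrow> (\<exists>j \<le> Suc i. vhead (C j) = Some n))
       \<and> (\<forall>i p n. i < N \<and> init_node (pc (C i) p) = Some n \<and> init_node (pc (C (Suc i)) p) \<noteq> Some n
            \<longrightarrow> (\<forall>k. Suc i \<le> k \<and> k \<le> N \<longrightarrow> ts_valid (C k) n))"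
proof (intro conjI allI impI; elim conjE)
  fix i p n
  assume "i < N" "init_node (pc (C i) p) \<noteq> Some n" "init_node (pc (C (Suc i)) p) = Some n"
  moreover obtain q where "pstep q (C i) (C (Suc i))"
    using execution_pstep[OF assms \<open>i < N\<close>] by blast
  ultimately have "vhead (C i) = Some n \<or> vhead (C (Suc i)) = Some n"
    using pstep_enters_initTS_at_vhead by metis
  then show "\<exists>j \<le> Suc i. vhead (C j) = Some n" by (metis le_Suc_eq order_refl)
next
  fix i p n k
  assume "i < N" "init_node (pc (C i) p) = Some n" "init_node (pc (C (Suc i)) p) \<noteq> Some n"
    and "Suc i \<le> k" "k \<le> N"
  moreover obtain q where "pstep q (C i) (C (Suc i))"
    using execution_pstep[OF assms \<open>i < N\<close>] by blast
  ultimately show "ts_valid (C k) n"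
    using pstep_leaves_initTS_ts_valid ts_valid_execution_persists[OF assms] by metis
qed

end
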